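(* Let $0<s<1$, $2s<N\le4s$, $1+\frac{2s}{N}<p<\frac{N}{N-2s}$, and $a_1,a_2,\mu_1,\mu_2,\beta>0$. For every $(u,v)\in H_{a_1}\times H_{a_2}$ there exists a unique $l_{(u,v)}\in\mathbb{R}$ such that $l_{(u,v)}\star(u,v)\in F$. Moreover, $l_{(u,v)}$ is the unique critical point of $\Psi_{(u,v)}(l):=E(l\star(u,v))$, and it is a strict maximum.
   Context: $(-\Delta)^s$ is the fractional Laplacian; $H_a:=\{u\in H^s(\mathbb{R}^N):\int u^2=a^2\}$. $(l\star u)(x):=e^{\frac{Nsl}{2}}u(e^{sl}x)$, $l\star(u,v):=(l\star u,l\star v)$. $E(u,v)=\frac12\int(|(-\Delta)^{s/2}u|^2+|(-\Delta)^{s/2}v|^2)dx-\frac1{2p}\int(\mu_1|u|^{2p}+2\beta|u|^p|v|^p+\mu_2|v|^{2p})dx$. $G(u,v):=\int(|(-\Delta)^{s/2}u|^2+|(-\Delta)^{s/2}v|^2)dx-\frac{(p-1)N}{2ps}\int(\mu_1|u|^{2p}+2\beta|u|^p|v|^p+\mu_2|v|^{2p})dx$ and $F:=\{(u,v)\in H_{a_1}\times H_{a_2}:G(u,v)=0\}$. *)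

theory Defs
  imports "HOL-Analysis.Analysis"
begin

definition gagliardo :: "real \<Rightarrow> ('a::euclidean_space \<Rightarrow> real) \<Rightarrow> ennreal" where
  "gagliardo s u = nn_integral lborel (\<lambda>x. nn_integral lborel (\<lambda>y.
      ennreal ((u x - u y)^2 / norm (x - y) powr (real DIM('a) + 2 * s))))"

definition frac_const :: "'a::euclidean_space itself \<Rightarrow> real \<Rightarrow> real" where
  "frac_const (t::'a itself) s =
     1 / (\<integral>z. (1 - cos (z \<bullet> (SOME b. b \<in> (Basis::'a set)))) / norm z powr (real DIM('a) + 2 * s) \<partial>(lborel::'a measure))"

text \<open>kinetic s u = integral of |(-Delta)^(s/2) u|^2 = C(N,s)/2 * [u]^2.\<close>
definition kinetic :: "real \<Rightarrow> ('a::euclidean_space \<Rightarrow> real) \<Rightarrow> real" where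
  "kinetic s u = frac_const TYPE('a) s / 2 * enn2real (gagliardo s u)"

definition Hs :: "real \<Rightarrow> ('a::euclidean_space \<Rightarrow> real) set" where
  "Hs s = {u. u \<in> borel_measurable lborel \<and> integrable lborel (\<lambda>x. (u x)^2) \<and> gagliardo s u < \<infinity>}"

definition Ha :: "real \<Rightarrow> real \<Rightarrow> ('a::euclidean_space \<Rightarrow> real) set" where
  "Ha s a = {u \<in> Hs s. (\<integral>x. (u x)^2 \<partial>lborel) = a^2}"

definition star :: "real \<Rightarrow> real \<Rightarrow> ('a::euclidean_space \<Rightarrow> real) \<Rightarrow> ('a \<Rightarrow> real)" where
  "star s l u = (\<lambda>x. exp (real DIM('a) * s * l / 2) * u (exp (s * l) *\<^sub>R x))"

definition potential :: "real \<Rightarrow> real \<Rightarrow> real \<Rightarrow> real \<Rightarrow> ('a::euclidean_space \<Rightarrow> real) \<Rightarrow> ('a \<Rightarrow> real) \<Rightarrow> real" where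
  "potential p \<mu>1 \<mu>2 \<beta> u v = (\<integral>x. \<mu>1 * \<bar>u x\<bar> powr (2 * p) + 2 * \<beta> * \<bar>u x\<bar> powr p * \<bar>v x\<bar> powr p
        + \<mu>2 * \<bar>v x\<bar> powr (2 * p) \<partial>lborel)"

definition energy :: "real \<Rightarrow> real \<Rightarrow> real \<Rightarrow> real \<Rightarrow> real \<Rightarrow> ('a::euclidean_space \<Rightarrow> real) \<Rightarrow> ('a \<Rightarrow> real) \<Rightarrow> real" where
  "energy s p \<mu>1 \<mu>2 \<beta> u v = 1/2 * (kinetic s u + kinetic s v) - 1 / (2 * p) * potential p \<mu>1 \<mu>2 \<beta> u v"

definition Gfun :: "real \<Rightarrow> real \<Rightarrow> real \<Rightarrow> real \<Rightarrow> real \<Rightarrow> ('a::euclidean_space \<Rightarrow> real) \<Rightarrow> ('a \<Rightarrow> real) \<Rightarrow> real" where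
  "Gfun s p \<mu>1 \<mu>2 \<beta> u v = (kinetic s u + kinetic s v)
      - (p - 1) * real DIM('a) / (2 * p * s) * potential p \<mu>1 \<mu>2 \<beta> u v"

definition Fset :: "real \<Rightarrow> real \<Rightarrow> real \<Rightarrow> real \<Rightarrow> real \<Rightarrow> real \<Rightarrow> real \<Rightarrow> (('a::euclidean_space \<Rightarrow> real) \<times> ('a \<Rightarrow> real)) set" where
  "Fset s p \<mu>1 \<mu>2 \<beta> a1 a2 = {(u, v). u \<in> Ha s a1 \<and> v \<in> Ha s a2 \<and> Gfun s p \<mu>1 \<mu>2 \<beta> u v = 0}"

definition Psi :: "real \<Rightarrow> real \<Rightarrow> real \<Rightarrow> real \<Rightarrow> real \<Rightarrow> ('a::euclidean_space \<Rightarrow> real) \<Rightarrow> ('a \<Rightarrow> real) \<Rightarrow> real \<Rightarrow> real" where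
  "Psi s p \<mu>1 \<mu>2 \<beta> u v l = energy s p \<mu>1 \<mu>2 \<beta> (star s l u) (star s l v)"

end

theory Submission
  imports Defs
begin

(*
  Along the fibre l |-> l * (u, v) the kinetic energy scales like exp (2 s^2 l) and the
  potential energy like exp (N s (p - 1) l), so Psi l = K/2 exp (2 s^2 l) - P/(2p) exp (N s (p - 1) l)
  and Psi' l = s^2 G (l * (u, v)).  Since p > 1 + 2s/N, the second exponent is the larger one;
  hence, once K, P > 0, the derivative changes sign exactly once, from + to -.  Its zero is the
  unique l with l * (u, v) in F and the strict global maximum of Psi.

  Both positivity claims need integrability, since a Bochner integral of a non-integrable function
  is 0.  K > 0 because a function with vanishing Gagliardo seminorm is a.e. constant, hence zero in
  L^2, and because C(N, s) > 0: a dyadic decomposition of R^N shows that (1 - cos z_1) / |z|^(N+2s)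
  is integrable.  P > 0 needs |u|^(2p) to be integrable, 2p being below the fractional Sobolev
  exponent 2N/(N - 2s).  This follows by bootstrapping weak L^q bounds: if {|u| > L/2} is small,
  each point with |u| > L sees half a ball on which |u| <= L/2, and the Gagliardo kernel on these
  pairs turns a weak L^q bound into a weak L^(2 + 2sq/N) bound.
*)

section \<open>Dilations and the fibre map\<close>

lemma nn_integral_lborel_scaleR:
  fixes f :: "'a::euclidean_space \<Rightarrow> ennreal"
  assumes [measurable]: "f \<in> borel_measurable borel" and c: "c > 0"
  shows "(\<integral>\<^sup>+x. f (c *\<^sub>R x) \<partial>lborel) = ennreal (1 / c ^ DIM('a)) * (\<integral>\<^sup>+x. f x \<partial>lborel)"
proof -
  have "(\<integral>\<^sup>+x. f x \<partial>lborel)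
      = (\<integral>\<^sup>+x. f x \<partial>density (distr lborel borel (\<lambda>x. 0 + c *\<^sub>R x)) (\<lambda>_. \<bar>c\<bar> ^ DIM('a)))"
    using lborel_affine[of c "0::'a"] c by simp
  also have "\<dots> = ennreal (c ^ DIM('a)) * (\<integral>\<^sup>+x. f (c *\<^sub>R x) \<partial>lborel)"
    using c by (simp add: nn_integral_density nn_integral_distr nn_integral_cmult)
  finally have "ennreal (1 / c ^ DIM('a)) * (\<integral>\<^sup>+x. f x \<partial>lborel)
      = ennreal (1 / c ^ DIM('a)) * ennreal (c ^ DIM('a)) * (\<integral>\<^sup>+x. f (c *\<^sub>R x) \<partial>lborel)"
    by (simp add: mult.assoc)
  also have "ennreal (1 / c ^ DIM('a)) * ennreal (c ^ DIM('a)) = 1"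
    using c by (simp flip: ennreal_mult')
  finally show ?thesis by simp
qed

lemma nn_integral_lborel_dilation:
  fixes g :: "'a::euclidean_space \<Rightarrow> real"
  assumes [measurable]: "g \<in> borel_measurable borel" and c: "c > 0" and k: "k \<ge> 0"
  shows "(\<integral>\<^sup>+x. ennreal (k * g (c *\<^sub>R x)) \<partial>lborel)
       = ennreal (k / c ^ DIM('a)) * (\<integral>\<^sup>+x. ennreal (g x) \<partial>lborel)"
proof -
  have "(\<integral>\<^sup>+x. ennreal (k * g (c *\<^sub>R x)) \<partial>lborel) = ennreal k * (\<integral>\<^sup>+x. ennreal (g (c *\<^sub>R x)) \<partial>lborel)"
    using k by (subst nn_integral_cmult[symmetric]) (auto intro!: nn_integral_cong simp: ennreal_mult')
  also have "\<dots> = ennreal k * (ennreal (1 / c ^ DIM('a)) * (\<integral>\<^sup>+x. ennreal (g x) \<partial>lborel))"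
    using c by (subst nn_integral_lborel_scaleR) auto
  finally show ?thesis using k c by (simp add: mult.assoc[symmetric] flip: ennreal_mult')
qed

lemma star_measurable [measurable]:
  fixes u :: "'a::euclidean_space \<Rightarrow> real"
  assumes [measurable]: "u \<in> borel_measurable borel"
  shows "star s l u \<in> borel_measurable borel"
  unfolding star_def by measurable

lemma exp_power_DIM: "exp x ^ DIM('a::euclidean_space) = exp (real DIM('a) * x)"
  by (simp add: exp_of_nat_mult)

lemma nn_integral_star_square:
  fixes u :: "'a::euclidean_space \<Rightarrow> real"
  assumes [measurable]: "u \<in> borel_measurable borel"
  shows "(\<integral>\<^sup>+x. ennreal ((star s l u x)^2) \<partial>lborel) = (\<integral>\<^sup>+x. ennreal ((u x)^2) \<partial>lborel)"
proof -
  have "(\<integral>\<^sup>+x. ennreal ((star s l u x)^2) \<partial>lborel)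
      = (\<integral>\<^sup>+x. ennreal (exp (s * l) ^ DIM('a) * (u (exp (s * l) *\<^sub>R x))^2) \<partial>lborel)"
    unfolding star_def exp_power_DIM
    by (intro nn_integral_cong) (simp add: power_mult_distrib power2_eq_square flip: exp_add)
  also have "\<dots> = (\<integral>\<^sup>+x. ennreal ((u x)^2) \<partial>lborel)"
    by (subst nn_integral_lborel_dilation) auto
  finally show ?thesis .
qed

lemma gagliardo_kernel_dilation:
  fixes u :: "'a::real_normed_vector \<Rightarrow> real"
  assumes "c > 0"
  shows "(E * u (c *\<^sub>R x) - E * u (c *\<^sub>R y))^2 / norm (x - y) powr a
      = E^2 * c powr a * ((u (c *\<^sub>R x) - u (c *\<^sub>R y))^2 / norm (c *\<^sub>R x - c *\<^sub>R y) powr a)"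
proof -
  have "norm (c *\<^sub>R x - c *\<^sub>R y) powr a = c powr a * norm (x - y) powr a"
    using assms by (simp add: powr_mult flip: scaleR_diff_right)
  moreover have "(E * u (c *\<^sub>R x) - E * u (c *\<^sub>R y))^2 = E^2 * (u (c *\<^sub>R x) - u (c *\<^sub>R y))^2"
    by (simp add: power_mult_distrib flip: right_diff_distrib)
  moreover have "c powr a > 0"
    using assms by simp
  ultimately show ?thesis
    by (cases "norm (x - y) powr a = 0") simp_all
qed

lemma gagliardo_dilation:
  fixes u :: "'a::euclidean_space \<Rightarrow> real"
  assumes [measurable]: "u \<in> borel_measurable borel" and "c > 0" "E \<ge> 0"
  shows "gagliardo s (\<lambda>x. E * u (c *\<^sub>R x))
       = ennreal (E^2 * c powr (2 * s) / c ^ DIM('a)) * gagliardo s u"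
proof -
  define a where "a = real DIM('a) + 2 * s"
  define h where "h x y = (u x - u y)^2 / norm (x - y) powr a" for x y
  define H where "H x = (\<integral>\<^sup>+y. ennreal (h x y) \<partial>lborel)" for x
  have [measurable]: "(\<lambda>(x, y). ennreal (h x y)) \<in> borel_measurable (lborel \<Otimes>\<^sub>M lborel)"
    "h x \<in> borel_measurable borel" for x
    unfolding h_def by measurable
  have "H \<in> borel_measurable lborel"
    unfolding H_def by (rule lborel.borel_measurable_nn_integral) simp
  then have [measurable]: "H \<in> borel_measurable borel"
    by simp
  have inner: "(\<integral>\<^sup>+y. ennreal ((E * u (c *\<^sub>R x) - E * u (c *\<^sub>R y))^2 / norm (x - y) powr a) \<partial>lborel)
      = ennreal (E^2 * c powr a / c ^ DIM('a)) * H (c *\<^sub>R x)" for x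
    unfolding gagliardo_kernel_dilation[OF \<open>c > 0\<close>] h_def[symmetric] H_def
    using \<open>c > 0\<close> by (subst nn_integral_lborel_dilation) auto
  have outer: "(\<integral>\<^sup>+x. H (c *\<^sub>R x) \<partial>lborel) = ennreal (1 / c ^ DIM('a)) * gagliardo s u"
    unfolding gagliardo_def a_def[symmetric] using nn_integral_lborel_scaleR[of H c] \<open>c > 0\<close>
    by (simp add: H_def h_def)
  have "gagliardo s (\<lambda>x. E * u (c *\<^sub>R x))
      = ennreal (E^2 * c powr a / c ^ DIM('a)) * (\<integral>\<^sup>+x. H (c *\<^sub>R x) \<partial>lborel)"
    unfolding gagliardo_def a_def[symmetric] inner by (simp add: nn_integral_cmult)
  also have "\<dots> = ennreal (E^2 * c powr a / c ^ DIM('a) * (1 / c ^ DIM('a))) * gagliardo s u"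
    unfolding outer using assms(2,3) by (subst ennreal_mult') (auto simp: mult.assoc)
  also have "E^2 * c powr a / c ^ DIM('a) * (1 / c ^ DIM('a)) = E^2 * c powr (2 * s) / c ^ DIM('a)"
    using \<open>c > 0\<close> by (simp add: a_def powr_add powr_realpow)
  finally show ?thesis .
qed

lemma gagliardo_star:
  fixes u :: "'a::euclidean_space \<Rightarrow> real"
  assumes [measurable]: "u \<in> borel_measurable borel"
  shows "gagliardo s (star s l u) = ennreal (exp (2 * s^2 * l)) * gagliardo s u"
proof -
  have "exp (real DIM('a) * s * l / 2) ^ 2 = exp (s * l) ^ DIM('a)"
    by (simp add: exp_power_DIM power2_eq_square mult_ac flip: exp_add)
  moreover have "exp (s * l) powr (2 * s) = exp (2 * s^2 * l)"
    by (simp add: powr_def power2_eq_square mult_ac)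
  ultimately show ?thesis
    unfolding star_def by (subst gagliardo_dilation) auto
qed

lemma kinetic_star:
  fixes u :: "'a::euclidean_space \<Rightarrow> real"
  assumes "u \<in> borel_measurable borel"
  shows "kinetic s (star s l u) = exp (2 * s^2 * l) * kinetic s u"
  unfolding kinetic_def using assms by (simp add: gagliardo_star enn2real_mult)

definition potential_density ::
    "real \<Rightarrow> real \<Rightarrow> real \<Rightarrow> real \<Rightarrow> ('a \<Rightarrow> real) \<Rightarrow> ('a \<Rightarrow> real) \<Rightarrow> 'a \<Rightarrow> real" where
  "potential_density p \<mu>1 \<mu>2 \<beta> u v x = \<mu>1 * \<bar>u x\<bar> powr (2 * p)
     + 2 * \<beta> * \<bar>u x\<bar> powr p * \<bar>v x\<bar> powr p + \<mu>2 * \<bar>v x\<bar> powr (2 * p)"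

lemma potential_eq_integral_density:
  "potential p \<mu>1 \<mu>2 \<beta> u v = (\<integral>x. potential_density p \<mu>1 \<mu>2 \<beta> u v x \<partial>lborel)"
  unfolding potential_def potential_density_def ..

lemma potential_density_nonneg:
  "\<mu>1 \<ge> 0 \<Longrightarrow> \<mu>2 \<ge> 0 \<Longrightarrow> \<beta> \<ge> 0 \<Longrightarrow> potential_density p \<mu>1 \<mu>2 \<beta> u v x \<ge> 0"
  unfolding potential_density_def by (intro add_nonneg_nonneg mult_nonneg_nonneg) auto

lemma potential_density_measurable [measurable]:
  assumes [measurable]: "u \<in> borel_measurable borel" "v \<in> borel_measurable borel"
  shows "potential_density p \<mu>1 \<mu>2 \<beta> u v \<in> borel_measurable borel"
  unfolding potential_density_def[abs_def] by measurable

lemma potential_density_star: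
  fixes u v :: "'a::euclidean_space \<Rightarrow> real"
  shows "potential_density p \<mu>1 \<mu>2 \<beta> (star s l u) (star s l v) x
      = exp (real DIM('a) * s * l * p) * potential_density p \<mu>1 \<mu>2 \<beta> u v (exp (s * l) *\<^sub>R x)"
proof -
  define E where "E = exp (real DIM('a) * s * l / 2)"
  have E: "E > 0"
    by (simp add: E_def)
  have abs_scale: "\<bar>E * w\<bar> powr q = E powr q * \<bar>w\<bar> powr q" for w q
    using E by (simp add: abs_mult powr_mult)
  have E2p: "E powr (2 * p) = exp (real DIM('a) * s * l * p)"
    unfolding E_def by (simp add: powr_def)
  moreover have "E powr p * E powr p = exp (real DIM('a) * s * l * p)"
    using E E2p by (simp flip: powr_add)
  ultimately show ?thesis
    unfolding potential_density_def star_def E_def[symmetric] abs_scale E2p[symmetric]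
    by (simp add: algebra_simps)
qed

lemma potential_star:
  fixes u v :: "'a::euclidean_space \<Rightarrow> real"
  assumes [measurable]: "u \<in> borel_measurable borel" "v \<in> borel_measurable borel"
    and "\<mu>1 \<ge> 0" "\<mu>2 \<ge> 0" "\<beta> \<ge> 0"
  shows "potential p \<mu>1 \<mu>2 \<beta> (star s l u) (star s l v)
      = exp (real DIM('a) * s * (p - 1) * l) * potential p \<mu>1 \<mu>2 \<beta> u v"
proof -
  have nonneg: "\<And>u v x. potential_density p \<mu>1 \<mu>2 \<beta> u v x \<ge> 0"
    using assms by (simp add: potential_density_nonneg)
  have "exp (real DIM('a) * s * l * p) / exp (s * l) ^ DIM('a) = exp (real DIM('a) * s * (p - 1) * l)"
    by (simp add: exp_power_DIM algebra_simps flip: exp_diff)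
  then have "(\<integral>\<^sup>+x. ennreal (potential_density p \<mu>1 \<mu>2 \<beta> (star s l u) (star s l v) x) \<partial>lborel)
     = ennreal (exp (real DIM('a) * s * (p - 1) * l))
       * (\<integral>\<^sup>+x. ennreal (potential_density p \<mu>1 \<mu>2 \<beta> u v x) \<partial>lborel)"
    unfolding potential_density_star by (subst nn_integral_lborel_dilation) auto
  then show ?thesis
    unfolding potential_eq_integral_density
    by (subst (1 2) integral_eq_nn_integral) (auto simp: nonneg enn2real_mult)
qed

lemma star_Hs:
  fixes u :: "'a::euclidean_space \<Rightarrow> real"
  assumes "u \<in> Hs s"
  shows "star s l u \<in> Hs s"
    and "(\<integral>x. (star s l u x)^2 \<partial>lborel) = (\<integral>x. (u x)^2 \<partial>lborel)"
proof -
  have [measurable]: "u \<in> borel_measurable borel"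
    using assms by (simp add: Hs_def)
  have "(\<integral>\<^sup>+x. ennreal ((u x)^2) \<partial>lborel) < \<infinity>" "gagliardo s u < \<infinity>"
    using assms by (auto simp: Hs_def integrable_iff_bounded)
  then show "star s l u \<in> Hs s"
    unfolding Hs_def
    by (auto simp: integrable_iff_bounded nn_integral_star_square gagliardo_star ennreal_mult_less_top)
  show "(\<integral>x. (star s l u x)^2 \<partial>lborel) = (\<integral>x. (u x)^2 \<partial>lborel)"
    by (subst (1 2) integral_eq_nn_integral) (auto simp: nn_integral_star_square)
qed

lemma star_Ha: "u \<in> Ha s a \<Longrightarrow> star s l u \<in> Ha s a"
  unfolding Ha_def using star_Hs[of u s l] by auto

section \<open>Dyadic shells and integrability\<close>

lemma ennreal_term_le_suminf: "(f::nat \<Rightarrow> ennreal) k \<le> (\<Sum>i. f i)"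
  using sum_le_suminf[of f "{k}"] by (simp add: summableI)

lemma powr_floor_log_bounds:
  fixes b t :: real
  assumes "1 < b" "0 < t"
  shows "b powr \<lfloor>log b t\<rfloor> \<le> t" and "t < b powr (real_of_int \<lfloor>log b t\<rfloor> + 1)"
proof -
  have "b powr \<lfloor>log b t\<rfloor> \<le> b powr log b t"
    using assms(1) by (intro powr_mono) auto
  moreover have "b powr log b t < b powr (real_of_int \<lfloor>log b t\<rfloor> + 1)"
    using assms(1) by (intro powr_less_mono) linarith+
  ultimately show "b powr \<lfloor>log b t\<rfloor> \<le> t" "t < b powr (real_of_int \<lfloor>log b t\<rfloor> + 1)"
    using assms by simp_all
qed

definition dyadic_shell :: "int \<Rightarrow> 'a::real_normed_vector set" where
  "dyadic_shell j = {z. 2 powr j \<le> norm z \<and> norm z < 2 powr (real_of_int j + 1)}"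

lemma dyadic_shell_measurable [measurable]:
  "dyadic_shell j \<in> sets (borel :: 'a::euclidean_space measure)"
  unfolding dyadic_shell_def by measurable

lemma mem_dyadic_shell_floor_log: "z \<noteq> 0 \<Longrightarrow> z \<in> dyadic_shell \<lfloor>log 2 (norm z)\<rfloor>"
  using powr_floor_log_bounds[of 2 "norm z"] by (simp add: dyadic_shell_def)

lemma emeasure_dyadic_shell_le:
  "emeasure lborel (dyadic_shell j :: 'a::euclidean_space set)
     \<le> ennreal (unit_ball_vol DIM('a) * 2 powr (real DIM('a) * (j + 1)))"
proof -
  have "emeasure lborel (dyadic_shell j :: 'a set) \<le> emeasure lborel (cball (0::'a) (2 powr (j + 1)))"
    by (intro emeasure_mono) (auto simp: dyadic_shell_def)
  also have "\<dots> = ennreal (unit_ball_vol DIM('a) * 2 powr (real DIM('a) * (j + 1)))"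
    by (simp add: emeasure_cball powr_power)
  finally show ?thesis .
qed

lemma norm_powr_le_on_dyadic_shell:
  assumes "z \<in> dyadic_shell j"
  shows "norm z powr (- c) \<le> (1 + 2 powr (- c)) * 2 powr (- c * j)"
proof (cases "c \<ge> 0")
  case True
  have "norm z powr (- c) \<le> (2 powr j) powr (- c)"
    using assms True by (intro powr_mono2') (auto simp: dyadic_shell_def)
  also have "\<dots> = 2 powr (- c * j)"
    by (simp add: powr_powr mult.commute)
  also have "\<dots> \<le> (1 + 2 powr (- c)) * 2 powr (- c * j)"
    by (simp add: distrib_right)
  finally show ?thesis .
next
  case False
  have "norm z powr (- c) \<le> (2 powr (j + 1)) powr (- c)"
    using assms False by (intro powr_mono2) (auto simp: dyadic_shell_def)
  also have "\<dots> = 2 powr (- c) * 2 powr (- c * j)"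
    by (simp add: powr_powr algebra_simps flip: powr_add)
  also have "\<dots> \<le> (1 + 2 powr (- c)) * 2 powr (- c * j)"
    by (simp add: distrib_right)
  finally show ?thesis .
qed

lemma nn_integral_dyadic_shell_le:
  fixes f :: "'a::euclidean_space \<Rightarrow> real"
  assumes bound: "\<And>z. z \<in> dyadic_shell j \<Longrightarrow> f z \<le> C * norm z powr (- c)" and "C \<ge> 0"
  shows "(\<integral>\<^sup>+z. ennreal (f z) * indicator (dyadic_shell j) z \<partial>lborel)
      \<le> ennreal (C * (1 + 2 powr (- c)) * unit_ball_vol DIM('a) * 2 powr DIM('a)
                 * 2 powr ((real DIM('a) - c) * j))"
proof -
  define B where "B = C * (1 + 2 powr (- c)) * 2 powr (- c * j)"
  have "B \<ge> 0"
    using \<open>C \<ge> 0\<close> by (simp add: B_def)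
  have f_le: "f z \<le> B" if "z \<in> dyadic_shell j" for z
    using bound[OF that] mult_left_mono[OF norm_powr_le_on_dyadic_shell[OF that, of c] \<open>C \<ge> 0\<close>]
    unfolding B_def by (simp add: mult.assoc)
  have "(\<integral>\<^sup>+z. ennreal (f z) * indicator (dyadic_shell j) z \<partial>lborel)
      \<le> (\<integral>\<^sup>+z. ennreal B * indicator (dyadic_shell j :: 'a set) z \<partial>lborel)"
    by (intro nn_integral_mono) (auto simp: indicator_def intro!: ennreal_leI f_le)
  also have "\<dots> = ennreal B * emeasure lborel (dyadic_shell j :: 'a set)"
    by (simp add: nn_integral_cmult_indicator)
  also have "\<dots> \<le> ennreal B * ennreal (unit_ball_vol DIM('a) * 2 powr (real DIM('a) * (j + 1)))"
    by (intro mult_left_mono emeasure_dyadic_shell_le) simp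
  also have "\<dots> = ennreal (C * (1 + 2 powr (- c)) * unit_ball_vol DIM('a) * 2 powr DIM('a)
                 * 2 powr ((real DIM('a) - c) * j))"
  proof -
    have shift: "2 powr (- c * j) * 2 powr (real DIM('a) * (j + 1))
        = 2 powr DIM('a) * 2 powr ((real DIM('a) - c) * j)"
      by (simp add: algebra_simps flip: powr_add)
    have "B * (unit_ball_vol DIM('a) * 2 powr (real DIM('a) * (j + 1)))
        = C * (1 + 2 powr (- c)) * unit_ball_vol DIM('a)
          * (2 powr (- c * j) * 2 powr (real DIM('a) * (j + 1)))"
      unfolding B_def by (simp only: mult_ac)
    also have "\<dots> = C * (1 + 2 powr (- c)) * unit_ball_vol DIM('a) * 2 powr DIM('a)
          * 2 powr ((real DIM('a) - c) * j)"
      unfolding shift by (simp only: mult_ac)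
    finally show ?thesis
      by (simp only: ennreal_mult'[OF \<open>B \<ge> 0\<close>, symmetric])
  qed
  finally show ?thesis .
qed

lemma dyadic_shell_cover:
  assumes "z \<noteq> 0"
  obtains k where "z \<in> dyadic_shell (int k) \<or> z \<in> dyadic_shell (- int k - 1)"
proof (cases "\<lfloor>log 2 (norm z)\<rfloor> \<ge> 0")
  case True
  then show ?thesis
    using that[of "nat \<lfloor>log 2 (norm z)\<rfloor>"] mem_dyadic_shell_floor_log[OF assms] by simp
next
  case False
  then show ?thesis
    using that[of "nat (- \<lfloor>log 2 (norm z)\<rfloor> - 1)"] mem_dyadic_shell_floor_log[OF assms] by simp
qed

lemma one_le_norm_if_in_dyadic_shell: "z \<in> dyadic_shell (int k) \<Longrightarrow> 1 \<le> norm z"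
  using ge_one_powr_ge_zero[of 2 "real k"] by (simp add: dyadic_shell_def)

lemma norm_less_one_if_in_dyadic_shell:
  assumes "z \<in> dyadic_shell (- int k - 1)"
  shows "z \<noteq> 0" and "norm z < 1"
proof -
  have "2 powr (- real k - 1) \<le> norm z" "norm z < 2 powr (- real k)"
    using assms by (simp_all add: dyadic_shell_def)
  moreover have "2 powr (- real k) \<le> 1"
    using powr_mono[of "- real k" 0 2] by simp
  ultimately show "z \<noteq> 0" "norm z < 1"
    using powr_gt_zero[of 2 "- real k - 1"] by auto
qed

lemma nn_integral_outer_dyadic_shell_le:
  fixes f :: "'a::euclidean_space \<Rightarrow> real"
  assumes far: "\<And>z. 1 \<le> norm z \<Longrightarrow> f z \<le> C * norm z powr (- a)" and "C \<ge> 0"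
  shows "(\<integral>\<^sup>+z. ennreal (f z) * indicator (dyadic_shell (int k)) z \<partial>lborel)
      \<le> ennreal (C * (1 + 2 powr (- a)) * unit_ball_vol DIM('a) * 2 powr DIM('a) * (2 powr (real DIM('a) - a)) ^ k)"
proof -
  have "(\<integral>\<^sup>+z. ennreal (f z) * indicator (dyadic_shell (int k)) z \<partial>lborel)
      \<le> ennreal (C * (1 + 2 powr (- a)) * unit_ball_vol DIM('a) * 2 powr DIM('a) * 2 powr ((real DIM('a) - a) * int k))"
    using far one_le_norm_if_in_dyadic_shell \<open>C \<ge> 0\<close> by (intro nn_integral_dyadic_shell_le) auto
  also have "2 powr ((real DIM('a) - a) * int k) = (2 powr (real DIM('a) - a)) ^ k"
    by (simp add: powr_power mult.commute)
  finally show ?thesis .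
qed

lemma nn_integral_inner_dyadic_shell_le:
  fixes f :: "'a::euclidean_space \<Rightarrow> real"
  assumes near: "\<And>z. z \<noteq> 0 \<Longrightarrow> norm z < 1 \<Longrightarrow> f z \<le> C * norm z powr (- b)" and "C \<ge> 0"
  shows "(\<integral>\<^sup>+z. ennreal (f z) * indicator (dyadic_shell (- int k - 1)) z \<partial>lborel)
      \<le> ennreal (C * (1 + 2 powr (- b)) * unit_ball_vol DIM('a) * 2 powr b * (2 powr (b - real DIM('a))) ^ k)"
proof -
  have shift: "2 powr DIM('a) * 2 powr ((real DIM('a) - b) * (- int k - 1)) = 2 powr b * (2 powr (b - real DIM('a))) ^ k"
    by (simp add: powr_power algebra_simps flip: powr_add)
  have "f z \<le> C * norm z powr (- b)" if "z \<in> dyadic_shell (- int k - 1)" for z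
    using near norm_less_one_if_in_dyadic_shell[OF that] by blast
  then have "(\<integral>\<^sup>+z. ennreal (f z) * indicator (dyadic_shell (- int k - 1)) z \<partial>lborel)
      \<le> ennreal (C * (1 + 2 powr (- b)) * unit_ball_vol DIM('a) * 2 powr DIM('a)
                 * 2 powr ((real DIM('a) - b) * (- int k - 1)))"
    using \<open>C \<ge> 0\<close> by (rule nn_integral_dyadic_shell_le)
  also have "C * (1 + 2 powr (- b)) * unit_ball_vol DIM('a) * 2 powr DIM('a) * 2 powr ((real DIM('a) - b) * (- int k - 1))
      = C * (1 + 2 powr (- b)) * unit_ball_vol DIM('a) * 2 powr b * (2 powr (b - real DIM('a))) ^ k"
    using shift by (simp only: mult.assoc)
  finally show ?thesis .
qed

lemma nn_integral_le_suminf_dyadic_shells: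
  fixes f :: "'a::euclidean_space \<Rightarrow> ennreal"
  assumes [measurable]: "f \<in> borel_measurable borel"
  shows "(\<integral>\<^sup>+z. f z \<partial>lborel)
      \<le> (\<Sum>k. (\<integral>\<^sup>+z. f z * indicator (dyadic_shell (int k)) z \<partial>lborel)
             + (\<integral>\<^sup>+z. f z * indicator (dyadic_shell (- int k - 1)) z \<partial>lborel))"
proof -
  define T where "T k z = f z * indicator (dyadic_shell (int k)) z
      + f z * indicator (dyadic_shell (- int k - 1)) z" for k z
  have "f z \<le> (\<Sum>k. T k z)" if "z \<noteq> 0" for z
  proof -
    obtain k where "z \<in> dyadic_shell (int k) \<or> z \<in> dyadic_shell (- int k - 1)"
      using dyadic_shell_cover[OF \<open>z \<noteq> 0\<close>] .
    moreover have "\<not> (z \<in> dyadic_shell (int k) \<and> z \<in> dyadic_shell (- int k - 1))"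
      using one_le_norm_if_in_dyadic_shell norm_less_one_if_in_dyadic_shell(2) by (meson leD)
    ultimately have "f z = T k z"
      by (auto simp: T_def)
    then show ?thesis
      using ennreal_term_le_suminf by metis
  qed
  then have "(\<integral>\<^sup>+z. f z \<partial>lborel) \<le> (\<integral>\<^sup>+z. (\<Sum>k. T k z) \<partial>lborel)"
    using AE_lborel_singleton[of 0] by (intro nn_integral_mono_AE) (auto elim: eventually_mono)
  also have "\<dots> = (\<Sum>k. \<integral>\<^sup>+z. T k z \<partial>lborel)"
    by (rule nn_integral_suminf) (simp add: T_def)
  finally show ?thesis
    by (simp add: T_def nn_integral_add)
qed

lemma integrable_lborel_if_norm_powr_bounded:
  fixes f :: "'a::euclidean_space \<Rightarrow> real"
  assumes [measurable]: "f \<in> borel_measurable borel" and nonneg: "\<And>z. 0 \<le> f z" and "0 \<le> C"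
    and "b < real DIM('a)" "real DIM('a) < a"
    and near: "\<And>z. z \<noteq> 0 \<Longrightarrow> norm z < 1 \<Longrightarrow> f z \<le> C * norm z powr (- b)"
    and far: "\<And>z. 1 \<le> norm z \<Longrightarrow> f z \<le> C * norm z powr (- a)"
  shows "integrable lborel f"
proof -
  define N where "N = real DIM('a)"
  define A where "A = C * (1 + 2 powr (- a)) * unit_ball_vol N * 2 powr N"
  define B where "B = C * (1 + 2 powr (- b)) * unit_ball_vol N * 2 powr b"
  define S where "S k = A * (2 powr (N - a)) ^ k + B * (2 powr (b - N)) ^ k" for k
  have "A \<ge> 0" "B \<ge> 0"
    using \<open>0 \<le> C\<close> by (simp_all add: A_def B_def N_def)
  have "(\<integral>\<^sup>+z. ennreal (f z) \<partial>lborel)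
      \<le> (\<Sum>k. (\<integral>\<^sup>+z. ennreal (f z) * indicator (dyadic_shell (int k)) z \<partial>lborel)
             + (\<integral>\<^sup>+z. ennreal (f z) * indicator (dyadic_shell (- int k - 1)) z \<partial>lborel))"
    by (rule nn_integral_le_suminf_dyadic_shells) measurable
  also have "\<dots> \<le> (\<Sum>k. ennreal (S k))"
  proof (intro suminf_le summableI)
    fix k
    show "(\<integral>\<^sup>+z. ennreal (f z) * indicator (dyadic_shell (int k)) z \<partial>lborel)
        + (\<integral>\<^sup>+z. ennreal (f z) * indicator (dyadic_shell (- int k - 1)) z \<partial>lborel) \<le> ennreal (S k)"
      using add_mono[OF nn_integral_outer_dyadic_shell_le[OF far \<open>0 \<le> C\<close>]
          nn_integral_inner_dyadic_shell_le[OF near \<open>0 \<le> C\<close>]] \<open>A \<ge> 0\<close> \<open>B \<ge> 0\<close>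
      by (simp add: S_def A_def B_def N_def flip: ennreal_plus)
  qed
  also have "\<dots> < \<infinity>"
  proof -
    have "summable S"
      unfolding S_def using assms(4,5)
      by (intro summable_add summable_mult summable_geometric) (simp_all add: N_def powr_less_one)
    moreover have "S k \<ge> 0" for k
      using \<open>A \<ge> 0\<close> \<open>B \<ge> 0\<close> by (simp add: S_def)
    ultimately show ?thesis
      using ennreal_suminf_neq_top by (simp add: top.not_eq_extremum)
  qed
  finally show ?thesis
    using nonneg by (simp add: integrable_iff_bounded)
qed

section \<open>Positivity of the kinetic energy\<close>

lemma one_minus_cos_le_half_square: "1 - cos (x::real) \<le> x^2 / 2"
proof -
  have "cos x = 1 - 2 * (sin (x / 2))^2"
    using cos_double_sin[of "x / 2"] by simp
  moreover have "(sin (x / 2))^2 \<le> (x / 2)^2"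
    using abs_sin_x_le_abs_x[of "x / 2"] by (metis abs_ge_zero power2_abs power_mono)
  ultimately show ?thesis
    by (simp add: power_divide)
qed

lemma integrable_one_minus_cos_kernel:
  fixes b :: "'a::euclidean_space"
  assumes "0 < s" "s < 1" "b \<in> Basis"
  shows "integrable lborel (\<lambda>z::'a. (1 - cos (z \<bullet> b)) / norm z powr (real DIM('a) + 2 * s))"
proof (rule integrable_lborel_if_norm_powr_bounded[where C = 2
      and a = "real DIM('a) + 2 * s" and b = "real DIM('a) + 2 * s - 2"])
  let ?a = "real DIM('a) + 2 * s"
  show "(1 - cos (z \<bullet> b)) / norm z powr ?a \<le> 2 * norm z powr (- ?a)" for z :: 'a
  proof -
    have "(1 - cos (z \<bullet> b)) / norm z powr ?a \<le> 2 / norm z powr ?a"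
      using cos_ge_minus_one[of "z \<bullet> b"] by (intro divide_right_mono) auto
    then show ?thesis
      by (simp only: powr_minus divide_inverse)
  qed
  show "(1 - cos (z \<bullet> b)) / norm z powr ?a \<le> 2 * norm z powr (- (?a - 2))"
    if "z \<noteq> 0" "norm z < 1" for z :: 'a
  proof -
    have "(z \<bullet> b)^2 \<le> (norm z)^2"
      using power_mono[OF Basis_le_norm[OF assms(3)], of z 2] by simp
    then have "(1 - cos (z \<bullet> b)) / norm z powr ?a \<le> norm z powr 2 / 2 / norm z powr ?a"
      using one_minus_cos_le_half_square[of "z \<bullet> b"] \<open>z \<noteq> 0\<close>
      by (intro divide_right_mono) (simp_all add: powr_numeral)
    also have "\<dots> = norm z powr (- (?a - 2)) / 2"
      by (simp add: powr_diff)
    finally show ?thesis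
      using powr_ge_zero[of "norm z" "- (?a - 2)"] by linarith
  qed
qed (use assms in \<open>auto simp: divide_nonneg_nonneg\<close>)

lemma cos_inner_neg_near_pi_Basis:
  fixes b :: "'a::euclidean_space"
  assumes "b \<in> Basis" "z \<in> ball (pi *\<^sub>R b) 1"
  shows "cos (z \<bullet> b) < 0"
proof -
  have "\<bar>(z - pi *\<^sub>R b) \<bullet> b\<bar> < 1"
    using Basis_le_norm[OF assms(1), of "z - pi *\<^sub>R b"] assms(2) by (simp add: dist_norm norm_minus_commute)
  then have "\<bar>z \<bullet> b - pi\<bar> < 1"
    using assms(1) by (simp add: inner_diff_left)
  then have "pi / 2 < z \<bullet> b" "z \<bullet> b < 3 * pi / 2"
    using pi_gt3 by linarith+
  then show ?thesis
    by (rule cos_lt_zero_pi)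
qed

lemma frac_const_pos:
  assumes "0 < s" "s < 1"
  shows "frac_const TYPE('a::euclidean_space) s > 0"
proof -
  define b :: 'a where "b = (SOME b. b \<in> Basis)"
  have b: "b \<in> Basis"
    unfolding b_def by (rule someI_ex) (use nonempty_Basis in blast)
  define f where "f z = (1 - cos (z \<bullet> b)) / norm z powr (real DIM('a) + 2 * s)" for z :: 'a
  have f_int: "integrable lborel f"
    unfolding f_def using integrable_one_minus_cos_kernel[OF assms b] by simp
  have f_nonneg: "f z \<ge> 0" for z
    by (simp add: f_def divide_nonneg_nonneg)
  have f_pos: "f z > 0" if "z \<in> ball (pi *\<^sub>R b) 1" for z
  proof -
    have "cos (z \<bullet> b) < 0"
      using b that by (rule cos_inner_neg_near_pi_Basis)
    moreover from this have "z \<noteq> 0"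
      by auto
    ultimately show ?thesis
      by (simp add: f_def)
  qed
  have "(\<integral>z. f z \<partial>lborel) \<noteq> 0"
  proof
    assume "(\<integral>z. f z \<partial>lborel) = 0"
    then have "AE z in lborel. f z = 0"
      using integral_nonneg_eq_0_iff_AE[OF f_int] f_nonneg by simp
    then have "AE z in lborel. z \<notin> ball (pi *\<^sub>R b) 1"
      by (rule eventually_mono) (use f_pos in force)
    then have "emeasure lborel (ball (pi *\<^sub>R b) 1) = 0"
      by (subst (asm) AE_iff_measurable[of "ball (pi *\<^sub>R b) 1"]) auto
    then show False
      using unit_ball_vol_pos[of "real DIM('a)"] by (simp add: emeasure_ball)
  qed
  then have "(\<integral>z. f z \<partial>lborel) > 0"
    using f_nonneg by (simp add: order_less_le)
  then show ?thesis
    unfolding frac_const_def f_def b_def by simp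
qed

lemma AE_const_if_gagliardo_eq_0:
  fixes u :: "'a::euclidean_space \<Rightarrow> real"
  assumes [measurable]: "u \<in> borel_measurable borel" and "gagliardo s u = 0"
  obtains c where "AE x in lborel. u x = c"
proof -
  define h where "h x y = ennreal ((u x - u y)^2 / norm (x - y) powr (real DIM('a) + 2 * s))" for x y
  have [measurable]: "(\<lambda>(x, y). h x y) \<in> borel_measurable (lborel \<Otimes>\<^sub>M lborel)"
    unfolding h_def by measurable
  have "(\<lambda>x. \<integral>\<^sup>+y. h x y \<partial>lborel) \<in> borel_measurable lborel"
    by (rule lborel.borel_measurable_nn_integral) simp
  moreover have "(\<integral>\<^sup>+x. (\<integral>\<^sup>+y. h x y \<partial>lborel) \<partial>lborel) = 0"
    using assms(2) by (simp add: gagliardo_def h_def)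
  ultimately have "AE x in lborel. (\<integral>\<^sup>+y. h x y \<partial>lborel) = 0"
    by (simp add: nn_integral_0_iff_AE)
  moreover have "AE y in lborel. u y = u x" if "(\<integral>\<^sup>+y. h x y \<partial>lborel) = 0" for x
  proof -
    have "(\<lambda>y. h x y) \<in> borel_measurable lborel"
      unfolding h_def by measurable
    then have "AE y in lborel. h x y = 0"
      using that by (simp add: nn_integral_0_iff_AE)
    then show ?thesis
      using AE_lborel_singleton[of x] by eventually_elim (auto simp: h_def ennreal_eq_0_iff divide_le_0_iff)
  qed
  ultimately have "AE x in lborel. AE y in lborel. u y = u x"
    by (auto elim: eventually_mono)
  moreover have "ae_filter (lborel :: 'a measure) \<noteq> bot"
    by (simp add: ae_filter_eq_bot_iff)
  ultimately obtain x where "AE y in lborel. u y = u x"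
    using eventually_happens' by blast
  then show ?thesis
    using that by blast
qed

lemma Ha_not_AE_eq_0:
  fixes u :: "'a::euclidean_space \<Rightarrow> real"
  assumes "u \<in> Ha s a" "a \<noteq> 0"
  shows "\<not> (AE x in lborel. u x = 0)"
proof
  assume "AE x in lborel. u x = 0"
  have [measurable]: "u \<in> borel_measurable borel"
    using assms(1) by (simp add: Ha_def Hs_def)
  have "(\<lambda>x. (u x)^2) \<in> borel_measurable borel"
    by measurable
  with \<open>AE x in lborel. u x = 0\<close> have "(\<integral>x. (u x)^2 \<partial>lborel) = 0"
    using integral_cong_AE[of "\<lambda>x. (u x)^2" lborel "\<lambda>_. 0"] by (auto elim: eventually_mono)
  then show False
    using assms by (simp add: Ha_def)
qed

lemma gagliardo_pos:
  fixes u :: "'a::euclidean_space \<Rightarrow> real"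
  assumes "u \<in> Ha s a" "a \<noteq> 0"
  shows "gagliardo s u > 0"
proof (rule ccontr)
  assume "\<not> gagliardo s u > 0"
  moreover have [measurable]: "u \<in> borel_measurable borel"
    using assms(1) by (simp add: Ha_def Hs_def)
  ultimately obtain c where c: "AE x in lborel. u x = c"
    using AE_const_if_gagliardo_eq_0 by (metis not_gr_zero)
  have u_int: "integrable lborel (\<lambda>x::'a. (u x)^2)"
    using assms(1) by (simp add: Ha_def Hs_def)
  have "integrable lborel (\<lambda>_::'a. c^2)"
    using c by (intro integrable_cong_AE_imp[OF u_int]) (auto elim: eventually_mono)
  then have "c = 0"
    by (simp add: integrable_iff_bounded ennreal_mult_top split: if_splits)
  then show False
    using c Ha_not_AE_eq_0[OF assms] by simp
qed

lemma kinetic_pos: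
  fixes u :: "'a::euclidean_space \<Rightarrow> real"
  assumes "0 < s" "s < 1" "u \<in> Ha s a" "a \<noteq> 0"
  shows "kinetic s u > 0"
proof -
  have "gagliardo s u < \<infinity>"
    using assms(3) by (simp add: Ha_def Hs_def)
  then have "enn2real (gagliardo s u) > 0"
    using gagliardo_pos[OF assms(3,4)] by (simp add: enn2real_positive_iff)
  then show ?thesis
    unfolding kinetic_def using frac_const_pos[OF assms(1,2), where 'a = 'a] by simp
qed

section \<open>Weak-type bounds and integrability of powers\<close>

definition weak_Lp :: "real \<Rightarrow> ('a::euclidean_space \<Rightarrow> real) \<Rightarrow> bool" where
  "weak_Lp q u \<longleftrightarrow> (\<exists>A>0. \<forall>L>0. emeasure lborel {x. L < \<bar>u x\<bar>} \<le> ennreal (A * L powr (- q)))"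

lemma ennreal_le_divide_if_mult_le:
  assumes "X * ennreal Q \<le> ennreal g" "Q > 0" "g \<ge> 0"
  shows "X \<le> ennreal (g / Q)"
proof (cases X)
  case (real e)
  then have "ennreal (e * Q) \<le> ennreal g"
    using assms by (simp add: ennreal_mult')
  then have "e \<le> g / Q"
    using assms real by (simp add: ennreal_le_iff field_simps)
  then show ?thesis
    using real by (auto intro!: ennreal_leI)
next
  case top
  then show ?thesis
    using assms by (simp add: ennreal_mult_top top_unique)
qed

lemma ennreal_le_if_double_le_add:
  assumes "ennreal (2 * m) \<le> X + ennreal m" "m \<ge> 0"
  shows "ennreal m \<le> X"
proof (cases X)
  case (real x)
  then have "ennreal (2 * m) \<le> ennreal (x + m)"
    using assms by (simp flip: ennreal_plus del: ennreal_plus)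
  then have "2 * m \<le> x + m"
    using assms real by (subst (asm) ennreal_le_iff) auto
  then show ?thesis
    using real by (auto intro!: ennreal_leI)
qed simp

lemma weak_Lp_2_if_square_integrable:
  fixes u :: "'a::euclidean_space \<Rightarrow> real"
  assumes [measurable]: "u \<in> borel_measurable borel" and "integrable lborel (\<lambda>x. (u x)^2)"
  shows "weak_Lp 2 u"
proof -
  define I where "I = (\<integral>x. (u x)^2 \<partial>lborel)"
  have "I \<ge> 0"
    unfolding I_def by simp
  have nn_I: "(\<integral>\<^sup>+x. ennreal ((u x)^2) \<partial>lborel) = ennreal I"
    unfolding I_def using assms(2) by (rule nn_integral_eq_integral) simp
  have "emeasure lborel {x. L < \<bar>u x\<bar>} \<le> ennreal ((I + 1) * L powr (- 2))" if "L > 0" for L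
  proof -
    have pointwise: "indicator {x. L < \<bar>u x\<bar>} x * ennreal (L^2) \<le> ennreal ((u x)^2)" for x
    proof (cases "L < \<bar>u x\<bar>")
      case True
      then have "L^2 \<le> \<bar>u x\<bar>^2"
        using \<open>L > 0\<close> by (intro power_mono) auto
      then show ?thesis
        using True by (simp add: ennreal_leI)
    qed simp
    have "emeasure lborel {x. L < \<bar>u x\<bar>} * ennreal (L^2)
        = (\<integral>\<^sup>+x. indicator {x. L < \<bar>u x\<bar>} x * ennreal (L^2) \<partial>lborel)"
      by (simp add: nn_integral_multc)
    also have "\<dots> \<le> ennreal I"
      unfolding nn_I[symmetric] by (intro nn_integral_mono pointwise)
    finally have "emeasure lborel {x. L < \<bar>u x\<bar>} * ennreal (L^2) \<le> ennreal I" .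
    then have "emeasure lborel {x. L < \<bar>u x\<bar>} \<le> ennreal (I / L^2)"
      using \<open>L > 0\<close> \<open>I \<ge> 0\<close> by (intro ennreal_le_divide_if_mult_le) auto
    also have "I / L^2 \<le> (I + 1) * L powr (- 2)"
      using \<open>L > 0\<close> by (simp add: powr_minus powr_numeral divide_inverse mult_right_mono)
    finally show ?thesis
      by (simp add: ennreal_leI)
  qed
  then show ?thesis
    unfolding weak_Lp_def using \<open>I \<ge> 0\<close> by (intro exI[of _ "I + 1"]) auto
qed

lemma emeasure_ball_inter_sublevel_ge:
  fixes u :: "'a::euclidean_space \<Rightarrow> real"
  assumes [measurable]: "u \<in> borel_measurable borel" and "r > 0"
    and small: "emeasure lborel {y. L / 2 < \<bar>u y\<bar>} \<le> ennreal (unit_ball_vol DIM('a) * r ^ DIM('a) / 2)"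
  shows "ennreal (unit_ball_vol DIM('a) * r ^ DIM('a) / 2) \<le> emeasure lborel (ball x r \<inter> {y. \<bar>u y\<bar> \<le> L / 2})"
proof (rule ennreal_le_if_double_le_add)
  have "ennreal (2 * (unit_ball_vol DIM('a) * r ^ DIM('a) / 2)) = emeasure lborel (ball x r)"
    using \<open>r > 0\<close> by (simp add: emeasure_ball)
  also have "\<dots> \<le> emeasure lborel ((ball x r \<inter> {y. \<bar>u y\<bar> \<le> L / 2}) \<union> {y. L / 2 < \<bar>u y\<bar>})"
    by (intro emeasure_mono) auto
  also have "\<dots> \<le> emeasure lborel (ball x r \<inter> {y. \<bar>u y\<bar> \<le> L / 2}) + emeasure lborel {y. L / 2 < \<bar>u y\<bar>}"
    by (intro emeasure_subadditive) auto
  also have "\<dots> \<le> emeasure lborel (ball x r \<inter> {y. \<bar>u y\<bar> \<le> L / 2})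
      + ennreal (unit_ball_vol DIM('a) * r ^ DIM('a) / 2)"
    using small by (intro add_left_mono)
  finally show "ennreal (2 * (unit_ball_vol DIM('a) * r ^ DIM('a) / 2))
      \<le> emeasure lborel (ball x r \<inter> {y. \<bar>u y\<bar> \<le> L / 2}) + ennreal (unit_ball_vol DIM('a) * r ^ DIM('a) / 2)" .
qed (use \<open>r > 0\<close> in simp)

lemma difference_quotient_ge_across_levels:
  fixes u :: "'a::real_normed_vector \<Rightarrow> real"
  assumes "L < \<bar>u x\<bar>" "\<bar>u y\<bar> \<le> L / 2" "dist x y < r" "0 \<le> a"
  shows "(L / 2)^2 / r powr a \<le> (u x - u y)^2 / norm (x - y) powr a"
proof -
  have "\<bar>u x\<bar> \<le> \<bar>u x - u y\<bar> + \<bar>u y\<bar>"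
    using abs_triangle_ineq[of "u x - u y" "u y"] by simp
  then have diff: "L / 2 \<le> \<bar>u x - u y\<bar>" and "x \<noteq> y"
    using assms(1,2) by auto
  have "(L / 2)^2 \<le> (u x - u y)^2"
    using power_mono[OF diff, of 2] assms(1,2) by simp
  moreover have "0 < norm (x - y) powr a" "norm (x - y) powr a \<le> r powr a"
    using \<open>x \<noteq> y\<close> assms(3,4) by (auto simp: dist_norm intro!: powr_mono2)
  ultimately show ?thesis
    by (intro frac_le) auto
qed

(* Each x with |u x| > L sees at least half of ball x r on which |u| <= L/2,
   and on such pairs the Gagliardo kernel is at least (L/2)^2 / r^(N+2s). *)
lemma emeasure_level_set_mult_le_gagliardo:
  fixes u :: "'a::euclidean_space \<Rightarrow> real"
  assumes [measurable]: "u \<in> borel_measurable borel" and "r > 0" "s \<ge> 0"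
    and small: "emeasure lborel {y. L / 2 < \<bar>u y\<bar>} \<le> ennreal (unit_ball_vol DIM('a) * r ^ DIM('a) / 2)"
  shows "emeasure lborel {x. L < \<bar>u x\<bar>} * ennreal (unit_ball_vol DIM('a) * L^2 / (8 * r powr (2 * s)))
      \<le> gagliardo s u"
proof -
  define a where "a = real DIM('a) + 2 * s"
  define m where "m = unit_ball_vol DIM('a) * r ^ DIM('a) / 2"
  define c where "c = (L / 2)^2 / r powr a"
  define S where "S = {x. L < \<bar>u x\<bar>}"
  define T where "T = {y. \<bar>u y\<bar> \<le> L / 2}"
  define h where "h x y = (u x - u y)^2 / norm (x - y) powr a" for x y
  have [measurable]: "S \<in> sets borel" "T \<in> sets borel"
    unfolding S_def T_def by measurable
  have [measurable]: "(\<lambda>(x, y). ennreal (h x y)) \<in> borel_measurable (lborel \<Otimes>\<^sub>M lborel)"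
    unfolding h_def by measurable
  have "m \<ge> 0" "c \<ge> 0"
    using \<open>r > 0\<close> by (simp_all add: m_def c_def)
  have kernel_ge: "c \<le> h x y" if "x \<in> S" "y \<in> ball x r \<inter> T" for x y
    using that \<open>s \<ge> 0\<close> unfolding c_def h_def a_def
    by (intro difference_quotient_ge_across_levels) (auto simp: S_def T_def)
  have inner: "indicator S x * ennreal (c * m) \<le> (\<integral>\<^sup>+y. ennreal (h x y) \<partial>lborel)" for x
  proof -
    have "ennreal m \<le> emeasure lborel (ball x r \<inter> T)"
      unfolding m_def T_def by (rule emeasure_ball_inter_sublevel_ge[OF _ \<open>r > 0\<close> small]) simp
    then have "ennreal (c * m) \<le> ennreal c * emeasure lborel (ball x r \<inter> T)"
      using mult_left_mono[of _ _ "ennreal c"] ennreal_mult'[OF \<open>c \<ge> 0\<close>, of m] by simp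
    then have "indicator S x * ennreal (c * m) \<le> indicator S x * (ennreal c * emeasure lborel (ball x r \<inter> T))"
      by (rule mult_left_mono) simp
    also have "\<dots> = (\<integral>\<^sup>+y. (indicator S x * ennreal c) * indicator (ball x r \<inter> T) y \<partial>lborel)"
      by (subst nn_integral_cmult_indicator) (auto simp: mult.assoc)
    also have "\<dots> \<le> (\<integral>\<^sup>+y. ennreal (h x y) \<partial>lborel)"
      using kernel_ge by (intro nn_integral_mono) (auto simp: indicator_def ennreal_leI)
    finally show ?thesis .
  qed
  have "emeasure lborel S * ennreal (c * m) = (\<integral>\<^sup>+x. indicator S x * ennreal (c * m) \<partial>lborel)"
    by (simp add: nn_integral_multc)
  also have "\<dots> \<le> gagliardo s u"
    unfolding gagliardo_def a_def[symmetric] h_def[symmetric] by (intro nn_integral_mono inner)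
  also have "c * m = unit_ball_vol DIM('a) * L^2 / (8 * r powr (2 * s))"
    using \<open>r > 0\<close> by (simp add: c_def m_def a_def powr_add powr_realpow power2_eq_square field_simps)
  finally show ?thesis
    unfolding S_def .
qed

(* r is the radius for which the weak bound at level L/2 fills exactly half of an r-ball. *)
lemma critical_radius_eqs:
  fixes A L q s \<kappa> :: real
  assumes "L > 0" "\<kappa> > 0" and \<kappa>_power: "\<kappa> ^ DIM('a::euclidean_space) = 2 * A * 2 powr q / unit_ball_vol DIM('a)"
  defines "r \<equiv> \<kappa> * L powr (- q / DIM('a))"
  shows "A * (L / 2) powr (- q) = unit_ball_vol DIM('a) * r ^ DIM('a) / 2"
    and "unit_ball_vol DIM('a) * L^2 / (8 * r powr (2 * s))
      = unit_ball_vol DIM('a) / (8 * \<kappa> powr (2 * s)) * L powr (2 + 2 * s * q / DIM('a))"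
proof -
  define N where "N = real DIM('a)"
  define \<omega> where "\<omega> = unit_ball_vol N"
  have "N > 0" "\<omega> > 0"
    by (simp_all add: N_def \<omega>_def)
  have "(L powr (- q / N)) ^ DIM('a) = L powr (- q)"
    using \<open>L > 0\<close> \<open>N > 0\<close> by (simp add: powr_power N_def)
  then have "r ^ DIM('a) = (2 * A * 2 powr q / \<omega>) * L powr (- q)"
    unfolding r_def N_def power_mult_distrib \<kappa>_power \<omega>_def by simp
  then show "A * (L / 2) powr (- q) = unit_ball_vol DIM('a) * r ^ DIM('a) / 2"
    using \<open>\<omega> > 0\<close> \<open>L > 0\<close> unfolding \<omega>_def N_def by (simp add: powr_divide powr_minus field_simps)
  have "r powr (2 * s) = \<kappa> powr (2 * s) * L powr (- (2 * s * q / N))"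
    unfolding r_def N_def using \<open>\<kappa> > 0\<close> \<open>L > 0\<close> by (simp add: powr_mult powr_powr mult_ac)
  then have "\<omega> * L^2 / (8 * r powr (2 * s)) = \<omega> / (8 * \<kappa> powr (2 * s)) * (L^2 * L powr (2 * s * q / N))"
    by (simp add: powr_minus field_simps)
  also have "L^2 * L powr (2 * s * q / N) = L powr (2 + 2 * s * q / N)"
    using \<open>L > 0\<close> by (simp add: powr_add powr_numeral)
  finally show "unit_ball_vol DIM('a) * L^2 / (8 * r powr (2 * s))
      = unit_ball_vol DIM('a) / (8 * \<kappa> powr (2 * s)) * L powr (2 + 2 * s * q / DIM('a))"
    unfolding \<omega>_def N_def .
qed

lemma emeasure_level_set_le_if_weak_bound:
  fixes u :: "'a::euclidean_space \<Rightarrow> real"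
  assumes u_meas [measurable]: "u \<in> borel_measurable borel" and "s \<ge> 0" "L > 0" "A > 0"
    and gagliardo: "gagliardo s u = ennreal g" "g \<ge> 0"
    and weak: "emeasure lborel {x. L / 2 < \<bar>u x\<bar>} \<le> ennreal (A * (L / 2) powr (- q))"
  defines "\<kappa> \<equiv> (2 * A * 2 powr q / unit_ball_vol DIM('a)) powr (1 / DIM('a))"
  shows "emeasure lborel {x. L < \<bar>u x\<bar>}
      \<le> ennreal (8 * g * \<kappa> powr (2 * s) / unit_ball_vol DIM('a) * L powr (- (2 + 2 * s * q / DIM('a))))"
proof -
  define \<omega> where "\<omega> = unit_ball_vol DIM('a)"
  define r where "r = \<kappa> * L powr (- q / DIM('a))"
  have "\<omega> > 0" and \<kappa>_pos: "\<kappa> > 0" and "r > 0"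
    using \<open>A > 0\<close> \<open>L > 0\<close> unit_ball_vol_pos[THEN dual_order.strict_implies_not_eq]
    by (simp_all add: \<omega>_def \<kappa>_def r_def)
  have \<kappa>_power: "\<kappa> ^ DIM('a) = 2 * A * 2 powr q / unit_ball_vol DIM('a)"
    using \<open>A > 0\<close> unit_ball_vol_pos[THEN dual_order.strict_implies_not_eq]
    unfolding \<kappa>_def by (simp add: powr_power)
  note radius = critical_radius_eqs(1)[OF \<open>L > 0\<close> \<kappa>_pos \<kappa>_power, folded r_def \<omega>_def]
    critical_radius_eqs(2)[OF \<open>L > 0\<close> \<kappa>_pos \<kappa>_power, where s = s, folded r_def \<omega>_def]
  have "emeasure lborel {x. L < \<bar>u x\<bar>} * ennreal (\<omega> * L^2 / (8 * r powr (2 * s))) \<le> ennreal g"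
    using emeasure_level_set_mult_le_gagliardo[OF u_meas \<open>r > 0\<close> \<open>s \<ge> 0\<close>] weak gagliardo
    unfolding radius(1) \<omega>_def by simp
  then have "emeasure lborel {x. L < \<bar>u x\<bar>}
      \<le> ennreal (g / (\<omega> / (8 * \<kappa> powr (2 * s)) * L powr (2 + 2 * s * q / DIM('a))))"
    unfolding radius(2) using \<open>\<omega> > 0\<close> \<open>\<kappa> > 0\<close> \<open>L > 0\<close> \<open>g \<ge> 0\<close>
    by (intro ennreal_le_divide_if_mult_le) auto
  also have "g / (\<omega> / (8 * \<kappa> powr (2 * s)) * L powr (2 + 2 * s * q / DIM('a)))
      = 8 * g * \<kappa> powr (2 * s) / \<omega> * L powr (- (2 + 2 * s * q / DIM('a)))"
    unfolding powr_minus using \<open>L > 0\<close> by (simp add: field_simps)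
  finally show ?thesis
    by (simp add: \<omega>_def)
qed

lemma weak_Lp_improve:
  fixes u :: "'a::euclidean_space \<Rightarrow> real"
  assumes [measurable]: "u \<in> borel_measurable borel" and "s \<ge> 0" "gagliardo s u < \<infinity>" "weak_Lp q u"
  shows "weak_Lp (2 + 2 * s * q / DIM('a)) u"
proof -
  obtain A where "A > 0" and weak: "\<And>L. L > 0 \<Longrightarrow> emeasure lborel {x. L < \<bar>u x\<bar>} \<le> ennreal (A * L powr (- q))"
    using assms(4) unfolding weak_Lp_def by blast
  define g where "g = enn2real (gagliardo s u)"
  define \<kappa> where "\<kappa> = (2 * A * 2 powr q / unit_ball_vol DIM('a)) powr (1 / DIM('a))"
  have "g \<ge> 0" "gagliardo s u = ennreal g"
    using assms(3) by (simp_all add: g_def less_top)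
  have "emeasure lborel {x. L < \<bar>u x\<bar>}
      \<le> ennreal (8 * (g + 1) * \<kappa> powr (2 * s) / unit_ball_vol DIM('a) * L powr (- (2 + 2 * s * q / DIM('a))))"
    if "L > 0" for L
  proof -
    have "emeasure lborel {x. L < \<bar>u x\<bar>}
        \<le> ennreal (8 * g * \<kappa> powr (2 * s) / unit_ball_vol DIM('a) * L powr (- (2 + 2 * s * q / DIM('a))))"
      unfolding \<kappa>_def using weak[of "L / 2"] \<open>L > 0\<close>
      by (intro emeasure_level_set_le_if_weak_bound \<open>s \<ge> 0\<close> \<open>A > 0\<close> \<open>g \<ge> 0\<close> \<open>gagliardo s u = ennreal g\<close>) auto
    also have "\<dots> \<le> ennreal (8 * (g + 1) * \<kappa> powr (2 * s) / unit_ball_vol DIM('a) * L powr (- (2 + 2 * s * q / DIM('a))))"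
      by (intro ennreal_leI mult_right_mono divide_right_mono) auto
    finally show ?thesis .
  qed
  moreover have "8 * (g + 1) * \<kappa> powr (2 * s) / unit_ball_vol DIM('a) > 0"
    using \<open>g \<ge> 0\<close> \<open>A > 0\<close> unit_ball_vol_pos[THEN dual_order.strict_implies_not_eq]
    by (simp add: \<kappa>_def)
  ultimately show ?thesis
    unfolding weak_Lp_def by blast
qed

(* The exponents q_k = q* - (q* - 2) theta^k satisfy q_(k+1) = 2 + theta q_k
   and increase to q* = 2 / (1 - theta) = 2N/(N - 2s). *)
lemma weak_Lp_iterate:
  fixes u :: "'a::euclidean_space \<Rightarrow> real"
  assumes [measurable]: "u \<in> borel_measurable borel" and "integrable lborel (\<lambda>x. (u x)^2)"
    and "s \<ge> 0" "2 * s < real DIM('a)" "gagliardo s u < \<infinity>"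
  defines "\<theta> \<equiv> 2 * s / real DIM('a)"
  shows "weak_Lp (2 / (1 - \<theta>) - (2 / (1 - \<theta>) - 2) * \<theta> ^ k) u"
proof (induction k)
  case 0
  then show ?case
    using weak_Lp_2_if_square_integrable[OF assms(1,2)] by simp
next
  case (Suc k)
  let ?q = "2 / (1 - \<theta>)"
  have "\<theta> < 1"
    using assms(4) by (simp add: \<theta>_def)
  then have "2 + \<theta> * ?q = ?q"
    by (simp add: field_simps)
  then have "2 + \<theta> * (?q - (?q - 2) * \<theta> ^ k) = ?q - (?q - 2) * \<theta> ^ Suc k"
    by (simp add: algebra_simps)
  moreover have "2 + 2 * s * (?q - (?q - 2) * \<theta> ^ k) / real DIM('a) = 2 + \<theta> * (?q - (?q - 2) * \<theta> ^ k)"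
    by (simp add: \<theta>_def)
  ultimately show ?case
    using weak_Lp_improve[OF assms(1,3,5) Suc.IH] by simp
qed

lemma powr_le_square_plus_level_sets:
  fixes u :: "'a \<Rightarrow> real"
  assumes "2 \<le> q"
  shows "ennreal (\<bar>u x\<bar> powr q) \<le> ennreal ((u x)^2)
      + (\<Sum>k. ennreal (2 powr ((real k + 1) * q)) * indicator {x. 2 powr (real k - 1) < \<bar>u x\<bar>} x)"
proof (cases "\<bar>u x\<bar> \<ge> 1")
  case True
  define k where "k = nat \<lfloor>log 2 \<bar>u x\<bar>\<rfloor>"
  have "real k = \<lfloor>log 2 \<bar>u x\<bar>\<rfloor>"
    using True by (simp add: k_def)
  then have k: "2 powr real k \<le> \<bar>u x\<bar>" "\<bar>u x\<bar> < 2 powr (real k + 1)"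
    using powr_floor_log_bounds[of 2 "\<bar>u x\<bar>"] True by simp_all
  moreover have "2 powr (real k - 1) < 2 powr real k"
    by (rule powr_less_mono) auto
  ultimately have "2 powr (real k - 1) < \<bar>u x\<bar>"
    by linarith
  moreover have "\<bar>u x\<bar> powr q \<le> 2 powr ((real k + 1) * q)"
    using k powr_mono2[of q "\<bar>u x\<bar>" "2 powr (real k + 1)"] assms by (simp add: powr_powr)
  ultimately have "ennreal (\<bar>u x\<bar> powr q)
      \<le> ennreal (2 powr ((real k + 1) * q)) * indicator {x. 2 powr (real k - 1) < \<bar>u x\<bar>} x"
    by (simp add: ennreal_leI)
  also have "\<dots> \<le> (\<Sum>k. ennreal (2 powr ((real k + 1) * q)) * indicator {x. 2 powr (real k - 1) < \<bar>u x\<bar>} x)"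
    by (rule ennreal_term_le_suminf)
  finally show ?thesis
    by (simp add: add_increasing)
next
  case False
  then have "\<bar>u x\<bar> powr q \<le> \<bar>u x\<bar> powr 2"
    using assms by (intro powr_mono') auto
  also have "\<dots> = (u x)^2"
    by (cases "u x = 0") (auto simp: powr_numeral)
  finally show ?thesis
    by (simp add: add_increasing2 ennreal_leI)
qed

lemma suminf_dyadic_level_sets_less_top:
  fixes u :: "'a::euclidean_space \<Rightarrow> real"
  assumes [measurable]: "u \<in> borel_measurable borel" and "weak_Lp q' u" "q < q'"
  shows "(\<Sum>k. \<integral>\<^sup>+x. ennreal (2 powr ((real k + 1) * q)) * indicator {x. 2 powr (real k - 1) < \<bar>u x\<bar>} x \<partial>lborel)
      < \<infinity>"
proof -
  obtain A where "A > 0" and weak: "\<And>L. L > 0 \<Longrightarrow> emeasure lborel {x. L < \<bar>u x\<bar>} \<le> ennreal (A * L powr (- q'))"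
    using assms(2) unfolding weak_Lp_def by blast
  define S where "S k = A * 2 powr q * 2 powr q' * (2 powr (q - q')) ^ k" for k :: nat
  have "(\<integral>\<^sup>+x. ennreal (2 powr ((real k + 1) * q)) * indicator {x. 2 powr (real k - 1) < \<bar>u x\<bar>} x \<partial>lborel)
      \<le> ennreal (S k)" for k
  proof -
    have "2 powr ((real k + 1) * q) * (A * (2 powr (real k - 1)) powr (- q')) = S k"
      unfolding S_def by (simp add: powr_powr powr_power algebra_simps flip: powr_add)
    have "(\<integral>\<^sup>+x. ennreal (2 powr ((real k + 1) * q)) * indicator {x. 2 powr (real k - 1) < \<bar>u x\<bar>} x \<partial>lborel)
        = ennreal (2 powr ((real k + 1) * q)) * emeasure lborel {x. 2 powr (real k - 1) < \<bar>u x\<bar>}"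
      by (simp add: nn_integral_cmult_indicator)
    also have "\<dots> \<le> ennreal (2 powr ((real k + 1) * q)) * ennreal (A * (2 powr (real k - 1)) powr (- q'))"
      by (intro mult_left_mono weak) auto
    also have "\<dots> = ennreal (S k)"
      using \<open>2 powr ((real k + 1) * q) * (A * (2 powr (real k - 1)) powr (- q')) = S k\<close>
      by (simp flip: ennreal_mult')
    finally show ?thesis .
  qed
  then have "(\<Sum>k. \<integral>\<^sup>+x. ennreal (2 powr ((real k + 1) * q)) * indicator {x. 2 powr (real k - 1) < \<bar>u x\<bar>} x \<partial>lborel)
      \<le> (\<Sum>k. ennreal (S k))"
    by (intro suminf_le summableI)
  also have "\<dots> < \<infinity>"
  proof -
    have "summable S"
      unfolding S_def using assms(3) by (intro summable_mult summable_geometric) (simp add: powr_less_one)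
    moreover have "S k \<ge> 0" for k
      using \<open>A > 0\<close> by (simp add: S_def)
    ultimately show ?thesis
      using ennreal_suminf_neq_top by (simp add: top.not_eq_extremum)
  qed
  finally show ?thesis .
qed

lemma integrable_powr_if_weak_Lp:
  fixes u :: "'a::euclidean_space \<Rightarrow> real"
  assumes [measurable]: "u \<in> borel_measurable borel" and "integrable lborel (\<lambda>x. (u x)^2)"
    and "weak_Lp q' u" "2 \<le> q" "q < q'"
  shows "integrable lborel (\<lambda>x. \<bar>u x\<bar> powr q)"
proof -
  define E where "E k = {x. 2 powr (real k - 1) < \<bar>u x\<bar>}" for k :: nat
  have [measurable]: "E k \<in> sets borel" for k
    unfolding E_def by measurable
  have "(\<integral>\<^sup>+x. ennreal (\<bar>u x\<bar> powr q) \<partial>lborel)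
      \<le> (\<integral>\<^sup>+x. ennreal ((u x)^2) + (\<Sum>k. ennreal (2 powr ((real k + 1) * q)) * indicator (E k) x) \<partial>lborel)"
    unfolding E_def by (intro nn_integral_mono powr_le_square_plus_level_sets[OF assms(4), of u])
  also have "\<dots> = (\<integral>\<^sup>+x. ennreal ((u x)^2) \<partial>lborel)
      + (\<Sum>k. \<integral>\<^sup>+x. ennreal (2 powr ((real k + 1) * q)) * indicator (E k) x \<partial>lborel)"
    by (subst nn_integral_add) (auto simp: nn_integral_suminf)
  also have "\<dots> < \<infinity>"
    using assms(2) suminf_dyadic_level_sets_less_top[OF assms(1,3,5)]
    by (simp add: E_def integrable_iff_bounded)
  finally show ?thesis
    by (simp add: integrable_iff_bounded)
qed

lemma Hs_integrable_powr:
  fixes u :: "'a::euclidean_space \<Rightarrow> real"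
  assumes "u \<in> Hs s" "s > 0" "2 * s < real DIM('a)"
    and "2 \<le> q" "q < 2 * real DIM('a) / (real DIM('a) - 2 * s)"
  shows "integrable lborel (\<lambda>x. \<bar>u x\<bar> powr q)"
proof -
  have u_meas: "u \<in> borel_measurable borel" and u_square: "integrable lborel (\<lambda>x. (u x)^2)"
    and u_gagliardo: "gagliardo s u < \<infinity>"
    using assms(1) by (auto simp: Hs_def)
  define \<theta> where "\<theta> = 2 * s / real DIM('a)"
  have "0 < \<theta>" "\<theta> < 1"
    using assms(2,3) by (auto simp: \<theta>_def)
  have "2 < 2 / (1 - \<theta>)"
    using \<open>0 < \<theta>\<close> \<open>\<theta> < 1\<close> by (simp add: field_simps)
  moreover have "q < 2 / (1 - \<theta>)"
    using assms(3,5) by (simp add: \<theta>_def field_simps)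
  ultimately have "(2 / (1 - \<theta>) - q) / (2 / (1 - \<theta>) - 2) > 0"
    by simp
  then obtain k where "\<theta> ^ k < (2 / (1 - \<theta>) - q) / (2 / (1 - \<theta>) - 2)"
    using real_arch_pow_inv \<open>\<theta> < 1\<close> by blast
  then have "\<theta> ^ k * (2 / (1 - \<theta>) - 2) < 2 / (1 - \<theta>) - q"
    using \<open>2 < 2 / (1 - \<theta>)\<close> by (simp add: pos_less_divide_eq)
  then have "q < 2 / (1 - \<theta>) - (2 / (1 - \<theta>) - 2) * \<theta> ^ k"
    by (simp add: algebra_simps)
  moreover have "weak_Lp (2 / (1 - \<theta>) - (2 / (1 - \<theta>) - 2) * \<theta> ^ k) u"
    unfolding \<theta>_def using weak_Lp_iterate[OF u_meas u_square _ assms(3) u_gagliardo] assms(2) by simp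
  ultimately show ?thesis
    using integrable_powr_if_weak_Lp[OF u_meas u_square] assms(4) by blast
qed

section \<open>Positivity of the potential energy\<close>

lemma potential_density_le:
  assumes "\<beta> \<ge> 0"
  shows "potential_density p \<mu>1 \<mu>2 \<beta> u v x
      \<le> (\<mu>1 + \<beta>) * \<bar>u x\<bar> powr (2 * p) + (\<mu>2 + \<beta>) * \<bar>v x\<bar> powr (2 * p)"
proof -
  have "(\<bar>u x\<bar> powr p)^2 = \<bar>u x\<bar> powr (2 * p)" "(\<bar>v x\<bar> powr p)^2 = \<bar>v x\<bar> powr (2 * p)"
    by (simp_all add: powr_powr[symmetric] powr_power mult.commute)
  then have "2 * (\<bar>u x\<bar> powr p * \<bar>v x\<bar> powr p) \<le> \<bar>u x\<bar> powr (2 * p) + \<bar>v x\<bar> powr (2 * p)"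
    using sum_squares_bound[of "\<bar>u x\<bar> powr p" "\<bar>v x\<bar> powr p"] by (simp add: power2_eq_square)
  then have "\<beta> * (2 * (\<bar>u x\<bar> powr p * \<bar>v x\<bar> powr p)) \<le> \<beta> * (\<bar>u x\<bar> powr (2 * p) + \<bar>v x\<bar> powr (2 * p))"
    using assms by (rule mult_left_mono)
  then show ?thesis
    unfolding potential_density_def by (simp add: algebra_simps)
qed

lemma potential_density_eq_0_imp:
  assumes "potential_density p \<mu>1 \<mu>2 \<beta> u v x = 0" "0 < \<mu>1" "0 \<le> \<mu>2" "0 \<le> \<beta>"
  shows "u x = 0"
proof -
  have "\<mu>1 * \<bar>u x\<bar> powr (2 * p) \<le> potential_density p \<mu>1 \<mu>2 \<beta> u v x"
    unfolding potential_density_def using assms(3,4) by (intro add_increasing2 add_increasing) auto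
  then have "\<bar>u x\<bar> powr (2 * p) \<le> 0"
    using assms(1,2) by (simp add: mult_le_0_iff)
  then show ?thesis
    by simp
qed

lemma integrable_potential_density:
  fixes u v :: "'a::euclidean_space \<Rightarrow> real"
  assumes [measurable]: "u \<in> borel_measurable borel" "v \<in> borel_measurable borel"
    and "integrable lborel (\<lambda>x. \<bar>u x\<bar> powr (2 * p))" "integrable lborel (\<lambda>x. \<bar>v x\<bar> powr (2 * p))"
    and "\<mu>1 \<ge> 0" "\<mu>2 \<ge> 0" "\<beta> \<ge> 0"
  shows "integrable lborel (potential_density p \<mu>1 \<mu>2 \<beta> u v)"
proof (rule Bochner_Integration.integrable_bound)
  show "integrable lborel (\<lambda>x. (\<mu>1 + \<beta>) * \<bar>u x\<bar> powr (2 * p) + (\<mu>2 + \<beta>) * \<bar>v x\<bar> powr (2 * p))"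
    using assms(3,4) by simp
  show "AE x in lborel. norm (potential_density p \<mu>1 \<mu>2 \<beta> u v x)
      \<le> norm ((\<mu>1 + \<beta>) * \<bar>u x\<bar> powr (2 * p) + (\<mu>2 + \<beta>) * \<bar>v x\<bar> powr (2 * p))"
  proof (rule AE_I2)
    fix x
    have "0 \<le> potential_density p \<mu>1 \<mu>2 \<beta> u v x"
      using assms(5-7) by (rule potential_density_nonneg)
    then show "norm (potential_density p \<mu>1 \<mu>2 \<beta> u v x)
        \<le> norm ((\<mu>1 + \<beta>) * \<bar>u x\<bar> powr (2 * p) + (\<mu>2 + \<beta>) * \<bar>v x\<bar> powr (2 * p))"
      using potential_density_le[OF assms(7), of p \<mu>1 \<mu>2 u v x] by simp
  qed
qed simp

lemma potential_pos:
  fixes u v :: "'a::euclidean_space \<Rightarrow> real"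
  assumes "0 < s" "2 * s < real DIM('a)" "1 \<le> p" "p < real DIM('a) / (real DIM('a) - 2 * s)"
    and "0 < \<mu>1" "0 \<le> \<mu>2" "0 \<le> \<beta>" and u: "u \<in> Ha s a" "a \<noteq> 0" and v: "v \<in> Hs s"
  shows "potential p \<mu>1 \<mu>2 \<beta> u v > 0"
proof -
  have "u \<in> Hs s"
    using u by (simp add: Ha_def)
  then have u_meas [measurable]: "u \<in> borel_measurable borel"
    and v_meas [measurable]: "v \<in> borel_measurable borel"
    using v by (simp_all add: Hs_def)
  have "real DIM('a) - 2 * s > 0"
    using assms(2) by simp
  then have exponent: "2 \<le> 2 * p" "2 * p < 2 * real DIM('a) / (real DIM('a) - 2 * s)"
    using assms(3,4) by (simp_all add: field_simps)
  have integrable: "integrable lborel (potential_density p \<mu>1 \<mu>2 \<beta> u v)"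
    using Hs_integrable_powr[OF \<open>u \<in> Hs s\<close> assms(1,2) exponent]
      Hs_integrable_powr[OF v assms(1,2) exponent] assms(5-7)
    by (intro integrable_potential_density[OF u_meas v_meas]) auto
  have nonneg: "AE x in lborel. potential_density p \<mu>1 \<mu>2 \<beta> u v x \<ge> 0"
    using assms(5-7) by (simp add: potential_density_nonneg)
  have "\<not> (AE x in lborel. potential_density p \<mu>1 \<mu>2 \<beta> u v x = 0)"
  proof
    assume "AE x in lborel. potential_density p \<mu>1 \<mu>2 \<beta> u v x = 0"
    then have "AE x in lborel. u x = 0"
      by (rule eventually_mono) (rule potential_density_eq_0_imp[OF _ assms(5-7)])
    with Ha_not_AE_eq_0[OF u] show False
      by simp
  qed
  then have "(\<integral>x. potential_density p \<mu>1 \<mu>2 \<beta> u v x \<partial>lborel) \<noteq> 0"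
    using integral_nonneg_eq_0_iff_AE[OF integrable nonneg] by simp
  moreover have "(\<integral>x. potential_density p \<mu>1 \<mu>2 \<beta> u v x \<partial>lborel) \<ge> 0"
    using nonneg by (rule integral_nonneg_AE)
  ultimately show ?thesis
    unfolding potential_eq_integral_density by simp
qed

section \<open>The fibre profile\<close>

lemma exp_difference_sign:
  fixes K Q \<alpha> \<gamma> :: real
  assumes "K > 0" "Q > 0" "\<alpha> < \<gamma>"
  obtains l0 where "\<And>t. t < l0 \<Longrightarrow> K * exp (\<alpha> * t) - Q * exp (\<gamma> * t) > 0"
    and "K * exp (\<alpha> * l0) - Q * exp (\<gamma> * l0) = 0"
    and "\<And>t. l0 < t \<Longrightarrow> K * exp (\<alpha> * t) - Q * exp (\<gamma> * t) < 0"
proof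
  define l0 where "l0 = ln (K / Q) / (\<gamma> - \<alpha>)"
  have "exp ((\<gamma> - \<alpha>) * l0) = K / Q"
    using assms by (simp add: l0_def)
  moreover have "exp (\<alpha> * t) * exp ((\<gamma> - \<alpha>) * t) = exp (\<gamma> * t)" for t
    by (simp add: algebra_simps flip: exp_add)
  ultimately have factor: "K * exp (\<alpha> * t) - Q * exp (\<gamma> * t)
      = Q * exp (\<alpha> * t) * (exp ((\<gamma> - \<alpha>) * l0) - exp ((\<gamma> - \<alpha>) * t))" for t
    using assms by (simp add: right_diff_distrib)
  show "K * exp (\<alpha> * t) - Q * exp (\<gamma> * t) > 0" if "t < l0" for t
    unfolding factor using assms that by simp
  show "K * exp (\<alpha> * l0) - Q * exp (\<gamma> * l0) = 0"
    unfolding factor by simp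
  show "K * exp (\<alpha> * t) - Q * exp (\<gamma> * t) < 0" if "l0 < t" for t
    unfolding factor using assms that by (simp add: mult_pos_neg)
qed

lemma strict_max_if_derivative_changes_sign:
  fixes f f' :: "real \<Rightarrow> real"
  assumes deriv: "\<And>t. (f has_real_derivative f' t) (at t)"
    and pos: "\<And>t. t < l0 \<Longrightarrow> f' t > 0" and neg: "\<And>t. l0 < t \<Longrightarrow> f' t < 0"
    and "l \<noteq> l0"
  shows "f l < f l0"
proof (cases "l < l0")
  case True
  then obtain z where "l < z" "z < l0" "f l0 - f l = (l0 - l) * f' z"
    using MVT2[of l l0 f f'] deriv by blast
  then show ?thesis
    using pos[of z] by (smt (verit) mult_pos_pos)
next
  case False
  then have "l0 < l"
    using \<open>l \<noteq> l0\<close> by simp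
  then obtain z where "l0 < z" "z < l" "f l - f l0 = (l - l0) * f' z"
    using MVT2[of l0 l f f'] deriv by blast
  then show ?thesis
    using neg[of z] by (smt (verit) mult_pos_neg)
qed

lemma unique_critical_point_strict_max:
  fixes g \<psi> :: "real \<Rightarrow> real"
  assumes "K > 0" "Q > 0" "m > 0" "\<alpha> < \<gamma>"
    and g: "\<And>l. g l = K * exp (\<alpha> * l) - Q * exp (\<gamma> * l)"
    and deriv: "\<And>l. (\<psi> has_real_derivative m * g l) (at l)"
  obtains l0 where "\<And>l. g l = 0 \<longleftrightarrow> l = l0"
    and "\<And>l. (\<psi> has_real_derivative 0) (at l) \<longleftrightarrow> l = l0"
    and "\<And>l. l \<noteq> l0 \<Longrightarrow> \<psi> l < \<psi> l0"
proof -
  obtain l0 where pos: "\<And>t. t < l0 \<Longrightarrow> g t > 0" and "g l0 = 0" and neg: "\<And>t. l0 < t \<Longrightarrow> g t < 0"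
    using exp_difference_sign[OF assms(1,2,4)] unfolding g by blast
  then have zero: "g l = 0 \<longleftrightarrow> l = l0" for l
    by (cases l l0 rule: linorder_cases) (auto dest: pos neg)
  have "(\<psi> has_real_derivative 0) (at l) \<longleftrightarrow> l = l0" for l
  proof
    assume "(\<psi> has_real_derivative 0) (at l)"
    then have "m * g l = 0"
      using DERIV_unique[OF deriv] by blast
    then show "l = l0"
      using zero \<open>m > 0\<close> by simp
  qed (use deriv[of l0] \<open>g l0 = 0\<close> in simp)
  moreover have "\<psi> l < \<psi> l0" if "l \<noteq> l0" for l
    using strict_max_if_derivative_changes_sign[OF deriv _ _ that] pos neg \<open>m > 0\<close>
    by (simp add: mult_pos_neg)
  ultimately show ?thesis
    using that zero by blast
qed

lemma L2_supercritical_exponents: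
  fixes N s p :: real
  assumes "0 < s" "0 < N" "1 + 2 * s / N < p"
  shows "1 < p" and "2 * s^2 < N * s * (p - 1)"
proof -
  have gap: "2 * s < N * (p - 1)"
    using assms(2,3) by (simp add: field_simps)
  then show "2 * s^2 < N * s * (p - 1)"
    using mult_strict_left_mono[OF gap assms(1)] by (simp add: power2_eq_square mult_ac)
  have "N * (p - 1) > 0"
    using gap assms(1) by linarith
  then show "1 < p"
    using assms(2) by (simp add: zero_less_mult_iff)
qed

lemma Gfun_star:
  fixes u v :: "'a::euclidean_space \<Rightarrow> real"
  assumes "u \<in> borel_measurable borel" "v \<in> borel_measurable borel"
    and "\<mu>1 \<ge> 0" "\<mu>2 \<ge> 0" "\<beta> \<ge> 0"
  shows "Gfun s p \<mu>1 \<mu>2 \<beta> (star s l u) (star s l v)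
      = (kinetic s u + kinetic s v) * exp (2 * s^2 * l)
        - (p - 1) * real DIM('a) / (2 * p * s) * potential p \<mu>1 \<mu>2 \<beta> u v
          * exp (real DIM('a) * s * (p - 1) * l)"
  unfolding Gfun_def using assms by (simp add: kinetic_star potential_star algebra_simps)

lemma Psi_eq:
  fixes u v :: "'a::euclidean_space \<Rightarrow> real"
  assumes "u \<in> borel_measurable borel" "v \<in> borel_measurable borel"
    and "\<mu>1 \<ge> 0" "\<mu>2 \<ge> 0" "\<beta> \<ge> 0"
  shows "Psi s p \<mu>1 \<mu>2 \<beta> u v l
      = 1/2 * (kinetic s u + kinetic s v) * exp (2 * s^2 * l)
        - 1 / (2 * p) * potential p \<mu>1 \<mu>2 \<beta> u v * exp (real DIM('a) * s * (p - 1) * l)"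
  unfolding Psi_def energy_def using assms by (simp add: kinetic_star potential_star algebra_simps)

lemma Psi_has_real_derivative:
  fixes u v :: "'a::euclidean_space \<Rightarrow> real"
  assumes "u \<in> borel_measurable borel" "v \<in> borel_measurable borel"
    and "\<mu>1 \<ge> 0" "\<mu>2 \<ge> 0" "\<beta> \<ge> 0" and "s \<noteq> 0" "p \<noteq> 0"
  shows "(Psi s p \<mu>1 \<mu>2 \<beta> u v has_real_derivative
           s^2 * Gfun s p \<mu>1 \<mu>2 \<beta> (star s l u) (star s l v)) (at l)"
proof -
  have "Psi s p \<mu>1 \<mu>2 \<beta> u v = (\<lambda>l. 1/2 * (kinetic s u + kinetic s v) * exp (2 * s^2 * l)
        - 1 / (2 * p) * potential p \<mu>1 \<mu>2 \<beta> u v * exp (real DIM('a) * s * (p - 1) * l))"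
    using Psi_eq[OF assms(1-5)] by blast
  then show ?thesis
    unfolding Gfun_star[OF assms(1-5)] using assms(6,7)
    by (auto intro!: derivative_eq_intros simp: field_simps power2_eq_square)
qed

theorem lemma4p6:
  fixes s p a1 a2 \<mu>1 \<mu>2 \<beta> :: real and u v :: "'a::euclidean_space \<Rightarrow> real"
  assumes "0 < s" "s < 1"
    and "2 * s < real DIM('a)" "real DIM('a) \<le> 4 * s"
    and "1 + 2 * s / real DIM('a) < p" "p < real DIM('a) / (real DIM('a) - 2 * s)"
    and "0 < a1" "0 < a2" "0 < \<mu>1" "0 < \<mu>2" "0 < \<beta>"
    and "u \<in> Ha s a1" "v \<in> Ha s a2"
  shows "(\<exists>!l. (star s l u, star s l v) \<in> Fset s p \<mu>1 \<mu>2 \<beta> a1 a2)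
     \<and> (\<exists>l. (star s l u, star s l v) \<in> Fset s p \<mu>1 \<mu>2 \<beta> a1 a2
           \<and> (Psi s p \<mu>1 \<mu>2 \<beta> u v has_real_derivative 0) (at l)
           \<and> (\<forall>l'. (Psi s p \<mu>1 \<mu>2 \<beta> u v has_real_derivative 0) (at l') \<longrightarrow> l' = l)
           \<and> (\<forall>l'. l' \<noteq> l \<longrightarrow> Psi s p \<mu>1 \<mu>2 \<beta> u v l' < Psi s p \<mu>1 \<mu>2 \<beta> u v l))"
proof -
  have meas: "u \<in> borel_measurable borel" "v \<in> borel_measurable borel"
    using assms(12,13) by (auto simp: Ha_def Hs_def)
  have p: "1 < p" and exponents: "2 * s^2 < real DIM('a) * s * (p - 1)"
    using L2_supercritical_exponents[OF assms(1) _ assms(5)] by simp_all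
  have K: "kinetic s u + kinetic s v > 0"
    using kinetic_pos assms(1,2,7,8,12,13) by (smt (verit))
  have P: "(p - 1) * real DIM('a) / (2 * p * s) * potential p \<mu>1 \<mu>2 \<beta> u v > 0"
    using assms(1,3,6,7,9-13) p by (intro mult_pos_pos potential_pos[where a = a1]) (auto simp: Ha_def)
  have "s^2 > 0"
    using assms(1) by simp
  moreover have "Gfun s p \<mu>1 \<mu>2 \<beta> (star s l u) (star s l v)
      = (kinetic s u + kinetic s v) * exp (2 * s^2 * l)
        - (p - 1) * real DIM('a) / (2 * p * s) * potential p \<mu>1 \<mu>2 \<beta> u v * exp (real DIM('a) * s * (p - 1) * l)" for l
    using Gfun_star[OF meas] assms(9-11) by simp
  moreover have "(Psi s p \<mu>1 \<mu>2 \<beta> u v has_real_derivative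
      s^2 * Gfun s p \<mu>1 \<mu>2 \<beta> (star s l u) (star s l v)) (at l)" for l
    using Psi_has_real_derivative[OF meas] assms(1,9-11) p by simp
  ultimately obtain l0 where zero: "\<And>l. Gfun s p \<mu>1 \<mu>2 \<beta> (star s l u) (star s l v) = 0 \<longleftrightarrow> l = l0"
    and "\<And>l. (Psi s p \<mu>1 \<mu>2 \<beta> u v has_real_derivative 0) (at l) \<longleftrightarrow> l = l0"
    and "\<And>l. l \<noteq> l0 \<Longrightarrow> Psi s p \<mu>1 \<mu>2 \<beta> u v l < Psi s p \<mu>1 \<mu>2 \<beta> u v l0"
    by (rule unique_critical_point_strict_max[OF K P _ exponents]) blast
  moreover have "(star s l u, star s l v) \<in> Fset s p \<mu>1 \<mu>2 \<beta> a1 a2 \<longleftrightarrow> l = l0" for l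
    using zero assms(12,13) by (simp add: Fset_def star_Ha)
  ultimately show ?thesis
    by auto
qed

end
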